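(* Let $m\ge2$ be an integer and let $\phi_1,\dots,\phi_m$ be positive functions of $2m$ real variables $x^1,\dots,x^{2m}$ (on an open set of $\mathbb{R}^{2m}$). Set $\phi=\phi_1\cdots\phi_m$, $\chi_i=dx^{2i-1}\wedge dx^{2i}$, $\sigma_i=\phi_i^{1-m}\phi\,\chi_i$, $\sigma=\sigma_1+\dots+\sigma_m$, and $\zeta=\zeta_1+\dots+\zeta_m$ with $\zeta_i=-\sigma_1\wedge\dots\wedge\widehat{\sigma_i}\wedge\dots\wedge\sigma_m$ (hat meaning omission). Then: (a) $\zeta$ is algebraically constant and indivisible; (b) $\sigma$ and $\zeta$ are dual to each other; (c) $\zeta$ is closed if and only if $\partial_{2i-1}\phi_i=\partial_{2i}\phi_i=0$ for every $i=1,\dots,m$ (no summation); (d) $\sigma$ is closed if and only if $\partial_k[\phi_i^{1-m}\phi]=0$ whenever $k\notin\{2i-1,2i\}$, which in turn is equivalent to the existence of functions $\rho_1,\dots,\rho_m$, each $\rho_j$ depending only on $x^{2j-1},x^{2j}$, with $\phi_i=\rho_1\cdots\widehat{\rho_i}\cdots\rho_m$ for all $i$.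
   Context: A differential form is algebraically constant if it has the same algebraic type at all points. A differential form $\zeta$ is indivisible if at each point $\xi\wedge\zeta\neq0$ for every nonzero covector $\xi$. The dual of a nondegenerate $2$-form $\sigma$ on a $2m$-dimensional space: writing $\sigma=\sum_{i=1}^m\xi^{2i-1}\wedge\xi^{2i}$ in a suitable basis $\xi^1,\dots,\xi^{2m}$ of the dual space, the dual is $-\sum_{i=1}^m\sigma_1\wedge\dots\wedge\widehat{\sigma_i}\wedge\dots\wedge\sigma_m$ with $\sigma_i=\xi^{2i-1}\wedge\xi^{2i}$ (equivalently $\omega\beta$, the contraction of the volume form $\omega=\sigma^{\wedge m}/m!$ against the bivector $\beta$ reciprocal to $\sigma$); for forms on manifolds duality is defined pointwise. *)

theory Defs
  imports "HOL-Analysis.Analysis" "HOL-Library.Function_Algebras"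
begin

text \<open>Points of R^n are functions x :: nat => real with coordinates
x 1, ..., x n and x k = 0 for k outside {1..n}; the set of such points carries the
(Euclidean = product) topology inherited from the product topology on nat => real.
A (pointwise) differential form on R^n is given by its coefficients w :: nat set => real,
w I being the coefficient of dx^I = dx^{i1} /\ ... /\ dx^{ik} (i1 < ... < ik), I = {i1,...,ik}.\<close>

definition Rn :: "nat \<Rightarrow> (nat \<Rightarrow> real) set" where
  "Rn n = {x. \<forall>k. k \<notin> {1..n} \<longrightarrow> x k = 0}"

definition open_Rn :: "nat \<Rightarrow> (nat \<Rightarrow> real) set \<Rightarrow> bool" where
  "open_Rn n U \<longleftrightarrow> U \<subseteq> Rn n \<and> openin (top_of_set (Rn n)) U"

definition pderiv :: "nat \<Rightarrow> ((nat \<Rightarrow> real) \<Rightarrow> real) \<Rightarrow> (nat \<Rightarrow> real) \<Rightarrow> real" where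
  "pderiv k f x = deriv (\<lambda>t. f (x(k := t))) (x k)"

fun ipd :: "nat list \<Rightarrow> ((nat \<Rightarrow> real) \<Rightarrow> real) \<Rightarrow> (nat \<Rightarrow> real) \<Rightarrow> real" where
  "ipd [] f = f"
| "ipd (k # ks) f = pderiv k (ipd ks f)"

definition smooth_on :: "nat \<Rightarrow> (nat \<Rightarrow> real) set \<Rightarrow> ((nat \<Rightarrow> real) \<Rightarrow> real) \<Rightarrow> bool" where
  "smooth_on n U f \<longleftrightarrow>
     (\<forall>ks. set ks \<subseteq> {1..n} \<longrightarrow>
        continuous_on U (ipd ks f) \<and>
        (\<forall>k\<in>{1..n}. \<forall>x\<in>U. (\<lambda>t. ipd ks f (x(k := t))) differentiable (at (x k))))"

definition form_deg :: "nat \<Rightarrow> nat \<Rightarrow> (nat set \<Rightarrow> real) \<Rightarrow> bool" where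
  "form_deg n k w \<longleftrightarrow> (\<forall>I. w I \<noteq> 0 \<longrightarrow> I \<subseteq> {1..n} \<and> card I = k)"

definition fsmult :: "real \<Rightarrow> (nat set \<Rightarrow> real) \<Rightarrow> nat set \<Rightarrow> real" where
  "fsmult c w = (\<lambda>I. c * w I)"

definition dx :: "nat \<Rightarrow> nat set \<Rightarrow> real" where
  "dx i = (\<lambda>I. if I = {i} then 1 else 0)"

definition fone :: "nat set \<Rightarrow> real" where
  "fone = (\<lambda>I. if I = {} then 1 else 0)"

definition wsign :: "nat set \<Rightarrow> nat set \<Rightarrow> real" where
  "wsign I J = (-1) ^ card {(i, j). i \<in> I \<and> j \<in> J \<and> j < i}"

definition wedge :: "(nat set \<Rightarrow> real) \<Rightarrow> (nat set \<Rightarrow> real) \<Rightarrow> nat set \<Rightarrow> real" where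
  "wedge a b = (\<lambda>K. \<Sum>I\<in>Pow K. wsign I (K - I) * a I * b (K - I))"

definition wedges :: "(nat set \<Rightarrow> real) list \<Rightarrow> nat set \<Rightarrow> real" where
  "wedges ws = foldr wedge ws fone"

definition lin :: "nat \<Rightarrow> (nat \<Rightarrow> nat \<Rightarrow> real) \<Rightarrow> nat \<Rightarrow> nat set \<Rightarrow> real" where
  "lin n A i = (\<Sum>j\<in>{1..n}. fsmult (A i j) (dx j))"

definition invertible_on :: "nat \<Rightarrow> (nat \<Rightarrow> nat \<Rightarrow> real) \<Rightarrow> bool" where
  "invertible_on n A \<longleftrightarrow> (\<exists>B. \<forall>i\<in>{1..n}. \<forall>j\<in>{1..n}.
      (\<Sum>k\<in>{1..n}. A i k * B k j) = (if i = j then 1 else 0) \<and>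
      (\<Sum>k\<in>{1..n}. B i k * A k j) = (if i = j then 1 else 0))"

definition pullback :: "nat \<Rightarrow> (nat \<Rightarrow> nat \<Rightarrow> real) \<Rightarrow> (nat set \<Rightarrow> real) \<Rightarrow> nat set \<Rightarrow> real" where
  "pullback n A w = (\<Sum>I\<in>Pow {1..n}. fsmult (w I) (wedges (map (lin n A) (sorted_list_of_set I))))"

definition same_type :: "nat \<Rightarrow> (nat set \<Rightarrow> real) \<Rightarrow> (nat set \<Rightarrow> real) \<Rightarrow> bool" where
  "same_type n w1 w2 \<longleftrightarrow> (\<exists>A. invertible_on n A \<and> pullback n A w1 = w2)"

definition alg_constant :: "nat \<Rightarrow> (nat \<Rightarrow> real) set \<Rightarrow> ((nat \<Rightarrow> real) \<Rightarrow> nat set \<Rightarrow> real) \<Rightarrow> bool" where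
  "alg_constant n U w \<longleftrightarrow> (\<forall>p\<in>U. \<forall>q\<in>U. same_type n (w p) (w q))"

definition indivisible :: "nat \<Rightarrow> (nat \<Rightarrow> real) set \<Rightarrow> ((nat \<Rightarrow> real) \<Rightarrow> nat set \<Rightarrow> real) \<Rightarrow> bool" where
  "indivisible n U w \<longleftrightarrow>
     (\<forall>x\<in>U. \<forall>\<xi>. form_deg n 1 \<xi> \<and> \<xi> \<noteq> 0 \<longrightarrow> wedge \<xi> (w x) \<noteq> 0)"

text \<open>zeta is the dual of the nondegenerate 2-form s on R^n (n = 2 mm): in some basis
xi^1..xi^n of the dual space, s = sum_i xi^{2i-1} /\ xi^{2i} and
zeta = - sum_i s_1 /\ ... (omit s_i) ... /\ s_mm with s_i = xi^{2i-1} /\ xi^{2i}.\<close>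
definition is_dual :: "nat \<Rightarrow> (nat set \<Rightarrow> real) \<Rightarrow> (nat set \<Rightarrow> real) \<Rightarrow> bool" where
  "is_dual n s z \<longleftrightarrow> even n \<and> (\<exists>B. invertible_on n B \<and>
     (let mm = n div 2;
          si = (\<lambda>i. wedge (lin n B (2*i - 1)) (lin n B (2*i)))
      in s = (\<Sum>i\<in>{1..mm}. si i) \<and>
         z = - (\<Sum>i\<in>{1..mm}. wedges (map si (filter (\<lambda>j. j \<noteq> i) [1..<mm+1])))))"

definition dual_fields :: "nat \<Rightarrow> (nat \<Rightarrow> real) set \<Rightarrow> ((nat \<Rightarrow> real) \<Rightarrow> nat set \<Rightarrow> real)
      \<Rightarrow> ((nat \<Rightarrow> real) \<Rightarrow> nat set \<Rightarrow> real) \<Rightarrow> bool" where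
  "dual_fields n U s z \<longleftrightarrow> (\<forall>x\<in>U. is_dual n (s x) (z x))"

definition dform :: "((nat \<Rightarrow> real) \<Rightarrow> nat set \<Rightarrow> real) \<Rightarrow> (nat \<Rightarrow> real) \<Rightarrow> nat set \<Rightarrow> real" where
  "dform w x K = (\<Sum>k\<in>K. (-1) ^ card {i\<in>K. i < k} * pderiv k (\<lambda>y. w y (K - {k})) x)"

definition closed_on :: "nat \<Rightarrow> (nat \<Rightarrow> real) set \<Rightarrow> ((nat \<Rightarrow> real) \<Rightarrow> nat set \<Rightarrow> real) \<Rightarrow> bool" where
  "closed_on n U w \<longleftrightarrow> (\<forall>x\<in>U. \<forall>K. K \<subseteq> {1..n} \<longrightarrow> dform w x K = 0)"

end

theory Submission
  imports Defs
begin

text \<open>Write \<chi>_i = dx(2i-1) \<and> dx(2i) and \<psi>_i = \<phi>_i^(1-m) \<phi>. Then \<sigma> = \<Sum> \<psi>_i \<chi>_i, and since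
  the product of the \<psi>_j over j \<noteq> i is \<phi>_i^(m-1), \<zeta> is the sum over i of the wedge products
  of all \<chi>_j, j \<noteq> i, with coefficients -\<phi>_i^(m-1). Both are sums of coordinate monomials with
  distinct supports and nonvanishing coefficients. Hence rescaling the dx(2i-1) brings \<sigma> and \<zeta>
  simultaneously to normal form and carries \<zeta> at one point to \<zeta> at any other. Moreover the
  monomial of \<xi> \<and> \<zeta> containing dx(k) and all \<chi>_j, j \<noteq> i (k in the i-th pair), as well as every
  monomial of d\<sigma> and d\<zeta>, receives a contribution from a single monomial only; this gives
  indivisibility and reduces closedness to the vanishing of single partial derivatives of
  coefficients. Finally, \<psi>_i depends locally only on x(2i-1), x(2i) iff \<psi>_i = \<rho>_i^(m-1) there,
  and this is equivalent to \<phi>_i being the product of the \<rho>_j over j \<noteq> i.\<close>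

definition basis_form :: "nat set \<Rightarrow> nat set \<Rightarrow> real" where
  "basis_form K = (\<lambda>I. if I = K then 1 else 0)"

lemma sum_fun_apply: "(\<Sum>i\<in>S. f i) x = (\<Sum>i\<in>S. f i x)"
  by (induction S rule: infinite_finite_induct) auto

lemma fsmult_basis_form_apply: "fsmult c (basis_form K) L = (if L = K then c else 0)"
  by (simp add: fsmult_def basis_form_def)

lemma fsmult_fsmult: "fsmult a (fsmult b w) = fsmult (a * b) w"
  by (simp add: fsmult_def mult.assoc)

lemma fsmult_one [simp]: "fsmult 1 w = w"
  by (simp add: fsmult_def)

lemma wedge_fsmult_left: "wedge (fsmult c a) b = fsmult c (wedge a b)"
  by (auto simp: wedge_def fsmult_def sum_distrib_left intro!: ext sum.cong)

lemma wedge_fsmult_right: "wedge a (fsmult c b) = fsmult c (wedge a b)"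
  by (auto simp: wedge_def fsmult_def sum_distrib_left intro!: ext sum.cong)

lemma wedges_Nil [simp]: "wedges [] = fone"
  by (simp add: wedges_def)

lemma wedges_Cons [simp]: "wedges (a # as) = wedge a (wedges as)"
  by (simp add: wedges_def)

lemma dx_eq_basis_form: "dx i = basis_form {i}"
  by (simp add: dx_def basis_form_def)

lemma fone_eq_basis_form: "fone = basis_form {}"
  by (simp add: fone_def basis_form_def)

lemma wsign_eq_1_if_less:
  assumes "\<And>i j. i \<in> I \<Longrightarrow> j \<in> J \<Longrightarrow> i < j"
  shows "wsign I J = 1"
proof -
  have "{(i, j). i \<in> I \<and> j \<in> J \<and> j < i} = {}"
    using assms by fastforce
  then show ?thesis
    by (simp only: wsign_def card.empty power_0)
qed

lemma wedge_basis_form: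
  assumes "finite I" "finite J"
  shows "wedge (basis_form I) (basis_form J) =
    (if I \<inter> J = {} then fsmult (wsign I J) (basis_form (I \<union> J)) else (\<lambda>_. 0))"
proof
  fix K
  show "wedge (basis_form I) (basis_form J) K =
    (if I \<inter> J = {} then fsmult (wsign I J) (basis_form (I \<union> J)) else (\<lambda>_. 0)) K"
  proof (cases "finite K")
    case False
    then have "K \<noteq> I \<union> J"
      using assms by auto
    then show ?thesis
      using False by (auto simp: wedge_def basis_form_def fsmult_def)
  next
    case True
    have "wedge (basis_form I) (basis_form J) K =
        (\<Sum>I'\<in>Pow K. if I' = I then (if K - I = J then wsign I J else 0) else 0)"
      unfolding wedge_def basis_form_def by (intro sum.cong) auto
    also have "\<dots> = (if I \<subseteq> K then (if K - I = J then wsign I J else 0) else 0)"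
      using True by (simp add: sum.delta')
    finally show ?thesis
      by (auto simp: fsmult_def basis_form_def)
  qed
qed

lemma wedge_basis_form_less:
  assumes "finite I" "finite J" and less: "\<And>i j. i \<in> I \<Longrightarrow> j \<in> J \<Longrightarrow> i < j"
  shows "wedge (basis_form I) (basis_form J) = basis_form (I \<union> J)"
proof -
  have "I \<inter> J = {}"
    using less by fastforce
  then show ?thesis
    using assms by (simp add: wedge_basis_form wsign_eq_1_if_less)
qed

lemma wedges_basis_forms_sorted:
  fixes xs :: "'a::linorder list"
  assumes "sorted_wrt (<) xs"
    and "\<And>j. j \<in> set xs \<Longrightarrow> finite (B j)"
    and "\<And>i j a b. i \<in> set xs \<Longrightarrow> j \<in> set xs \<Longrightarrow> i < j \<Longrightarrow>
      a \<in> B i \<Longrightarrow> b \<in> B j \<Longrightarrow> a < b"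
  shows "wedges (map (\<lambda>j. fsmult (c j) (basis_form (B j))) xs)
       = fsmult (\<Prod>j\<in>set xs. c j) (basis_form (\<Union>j\<in>set xs. B j))"
  using assms
proof (induction xs)
  case Nil
  then show ?case
    by (simp add: fone_eq_basis_form)
next
  case (Cons x xs)
  have "x \<notin> set xs"
    using Cons.prems(1) by auto
  have less: "a < b" if "a \<in> B x" "j \<in> set xs" "b \<in> B j" for a b j
    using Cons.prems(1) Cons.prems(3)[of x j a b] that by simp
  have "wedge (basis_form (B x)) (basis_form (\<Union>j\<in>set xs. B j)) = basis_form (\<Union>j\<in>set (x # xs). B j)"
    using Cons.prems(2) less by (subst wedge_basis_form_less) auto
  moreover have "wedges (map (\<lambda>j. fsmult (c j) (basis_form (B j))) xs)
      = fsmult (\<Prod>j\<in>set xs. c j) (basis_form (\<Union>j\<in>set xs. B j))"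
    by (rule Cons.IH) (use Cons.prems(1,2) in \<open>auto intro: Cons.prems(3)\<close>)
  ultimately show ?case
    using \<open>x \<notin> set xs\<close> by (simp add: wedge_fsmult_left wedge_fsmult_right fsmult_fsmult mult.commute)
qed

lemma sum_fsmult_basis_form_at:
  assumes "finite S" "inj_on T S" "j \<in> S"
  shows "(\<Sum>i\<in>S. fsmult (c i) (basis_form (T i))) (T j) = c j"
proof -
  have "(\<Sum>i\<in>S. fsmult (c i) (basis_form (T i))) (T j) = (\<Sum>i\<in>S. if i = j then c i else 0)"
    unfolding sum_fun_apply fsmult_basis_form_apply
    using assms(2,3) by (intro sum.cong) (auto simp: inj_on_def)
  also have "\<dots> = c j"
    using assms(1,3) by simp
  finally show ?thesis .
qed

lemma sum_fsmult_basis_form_outside: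
  "L \<notin> T ` S \<Longrightarrow> (\<Sum>i\<in>S. fsmult (c i) (basis_form (T i))) L = 0"
  by (auto simp: sum_fun_apply fsmult_basis_form_apply intro!: sum.neutral)

section \<open>Diagonal changes of basis\<close>

definition diag_matrix :: "(nat \<Rightarrow> real) \<Rightarrow> nat \<Rightarrow> nat \<Rightarrow> real" where
  "diag_matrix d = (\<lambda>a b. if a = b then d a else 0)"

lemma lin_diag_matrix: "k \<in> {1..n} \<Longrightarrow> lin n (diag_matrix d) k = fsmult (d k) (dx k)"
proof
  fix L assume k: "k \<in> {1..n}"
  have "lin n (diag_matrix d) k L = (\<Sum>j\<in>{1..n}. if j = k then d k * dx k L else 0)"
    unfolding lin_def sum_fun_apply by (intro sum.cong) (auto simp: fsmult_def diag_matrix_def)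
  also have "\<dots> = fsmult (d k) (dx k) L"
    using k by (simp add: fsmult_def)
  finally show "lin n (diag_matrix d) k L = fsmult (d k) (dx k) L" .
qed

lemma wedges_lin_diag_matrix:
  assumes "I \<subseteq> {1..n}"
  shows "wedges (map (lin n (diag_matrix d)) (sorted_list_of_set I))
       = fsmult (\<Prod>k\<in>I. d k) (basis_form I)"
proof -
  have fin: "finite I"
    using assms finite_subset by blast
  have "map (lin n (diag_matrix d)) (sorted_list_of_set I)
      = map (\<lambda>k. fsmult (d k) (basis_form {k})) (sorted_list_of_set I)"
    using assms fin by (intro map_cong) (auto simp: lin_diag_matrix dx_eq_basis_form)
  also have "wedges \<dots> = fsmult (\<Prod>k\<in>I. d k) (basis_form (\<Union>k\<in>I. {k}))"
    using fin by (subst wedges_basis_forms_sorted) auto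
  finally show ?thesis
    by simp
qed

lemma pullback_diag_matrix:
  assumes "\<And>I. w I \<noteq> 0 \<Longrightarrow> I \<subseteq> {1..n}"
  shows "pullback n (diag_matrix d) w L = w L * (\<Prod>k\<in>L. d k)"
proof -
  have "pullback n (diag_matrix d) w L
      = (\<Sum>I\<in>Pow {1..n}. if I = L then w L * (\<Prod>k\<in>L. d k) else 0)"
    unfolding pullback_def sum_fun_apply
    by (intro sum.cong) (auto simp: wedges_lin_diag_matrix fsmult_def basis_form_def)
  also have "\<dots> = w L * (\<Prod>k\<in>L. d k)"
    using assms[of L] by (auto simp: sum.delta')
  finally show ?thesis .
qed

lemma invertible_on_diag_matrix:
  assumes "\<And>k. k \<in> {1..n} \<Longrightarrow> d k \<noteq> 0"
  shows "invertible_on n (diag_matrix d)"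
  unfolding invertible_on_def
proof (intro exI[of _ "diag_matrix (\<lambda>k. 1 / d k)"] ballI conjI)
  fix i j assume i: "i \<in> {1..n}" and "j \<in> {1..n}"
  have "(\<Sum>k\<in>{1..n}. diag_matrix d i k * diag_matrix (\<lambda>k. 1 / d k) k j)
      = (\<Sum>k\<in>{1..n}. if k = i then (if i = j then 1 else 0) else 0)"
    using assms[OF i] by (intro sum.cong) (auto simp: diag_matrix_def)
  then show "(\<Sum>k\<in>{1..n}. diag_matrix d i k * diag_matrix (\<lambda>k. 1 / d k) k j) = (if i = j then 1 else 0)"
    using i by simp
  have "(\<Sum>k\<in>{1..n}. diag_matrix (\<lambda>k. 1 / d k) i k * diag_matrix d k j)
      = (\<Sum>k\<in>{1..n}. if k = i then (if i = j then 1 else 0) else 0)"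
    using assms[OF i] by (intro sum.cong) (auto simp: diag_matrix_def)
  then show "(\<Sum>k\<in>{1..n}. diag_matrix (\<lambda>k. 1 / d k) i k * diag_matrix d k j) = (if i = j then 1 else 0)"
    using i by simp
qed

section \<open>Exterior derivative of fields with separated monomials\<close>

lemma pderiv_zero [simp]: "pderiv k (\<lambda>y. 0) x = 0"
  by (simp add: pderiv_def)

lemma dform_eq_0:
  assumes coeff: "\<And>y j. j \<in> S \<Longrightarrow> w y (T j) = f j y"
    and zero: "\<And>y L. L \<notin> T ` S \<Longrightarrow> w y L = 0"
    and pderiv_0: "\<And>k j. k \<in> K \<Longrightarrow> j \<in> S \<Longrightarrow> K - {k} = T j \<Longrightarrow> pderiv k (f j) x = 0"
  shows "dform w x K = 0"
  unfolding dform_def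
proof (intro sum.neutral ballI)
  fix k assume k: "k \<in> K"
  have "pderiv k (\<lambda>y. w y (K - {k})) x = 0"
  proof (cases "K - {k} \<in> T ` S")
    case True
    then obtain j where j: "j \<in> S" "K - {k} = T j"
      by auto
    then have "(\<lambda>y. w y (K - {k})) = f j"
      using coeff by auto
    then show ?thesis
      using pderiv_0[OF k j] by simp
  next
    case False
    then show ?thesis
      using zero by simp
  qed
  then show "(-1) ^ card {i \<in> K. i < k} * pderiv k (\<lambda>y. w y (K - {k})) x = 0"
    by simp
qed

lemma pderiv_eq_0_if_dform_eq_0:
  assumes coeff: "\<And>y j. j \<in> S \<Longrightarrow> w y (T j) = f j y"
    and zero: "\<And>y L. L \<notin> T ` S \<Longrightarrow> w y L = 0"
    and "finite K" "k \<in> K" "j \<in> S" "K - {k} = T j"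
    and unique: "\<And>k'. k' \<in> K \<Longrightarrow> k' \<noteq> k \<Longrightarrow> K - {k'} \<notin> T ` S"
    and closed: "dform w x K = 0"
  shows "pderiv k (f j) x = 0"
proof -
  have "(\<lambda>y. w y (K - {k})) = f j"
    using coeff assms(5,6) by auto
  moreover have "(\<Sum>k'\<in>K - {k}. (-1) ^ card {i \<in> K. i < k'} * pderiv k' (\<lambda>y. w y (K - {k'})) x) = 0"
    using unique zero by (intro sum.neutral) auto
  moreover have "dform w x K = (-1) ^ card {i \<in> K. i < k} * pderiv k (\<lambda>y. w y (K - {k})) x
      + (\<Sum>k'\<in>K - {k}. (-1) ^ card {i \<in> K. i < k'} * pderiv k' (\<lambda>y. w y (K - {k'})) x)"
    unfolding dform_def by (rule sum.remove[OF assms(3,4)])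
  ultimately have "dform w x K = (-1) ^ card {i \<in> K. i < k} * pderiv k (f j) x"
    by simp
  then show ?thesis
    using closed by simp
qed

definition coord_pair :: "nat \<Rightarrow> nat set" where
  "coord_pair i = {2*i - 1, 2*i}"

definition coord_pair_compl :: "nat \<Rightarrow> nat \<Rightarrow> nat set" where
  "coord_pair_compl m i = {1..2*m} - coord_pair i"

lemma finite_coord_pair [simp]: "finite (coord_pair i)"
  by (simp add: coord_pair_def)

lemma finite_coord_pair_compl [simp]: "finite (coord_pair_compl m i)"
  by (simp add: coord_pair_compl_def)

lemma coord_pair_subset: "i \<in> {1..m} \<Longrightarrow> coord_pair i \<subseteq> {1..2*m}"
  by (auto simp: coord_pair_def)

lemma coord_pair_compl_subset: "coord_pair_compl m i \<subseteq> {1..2*m}"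
  by (auto simp: coord_pair_compl_def)

lemma coord_pair_less: "i < j \<Longrightarrow> a \<in> coord_pair i \<Longrightarrow> b \<in> coord_pair j \<Longrightarrow> a < b"
  by (auto simp: coord_pair_def)

text \<open>Because of truncated subtraction \<open>coord_pair 0 = {0}\<close>, so the pairs are disjoint for
  all indices, not only for positive ones.\<close>

lemma coord_pair_unique: "k \<in> coord_pair i \<Longrightarrow> k \<in> coord_pair j \<Longrightarrow> i = j"
  by (auto simp: coord_pair_def)

lemma coord_pair_containing: "k \<in> {1..2*m} \<Longrightarrow> (k + 1) div 2 \<in> {1..m} \<and> k \<in> coord_pair ((k + 1) div 2)"
  by (auto simp: coord_pair_def)

lemma coord_pair_other: "1 \<le> i \<Longrightarrow> k \<in> coord_pair i \<Longrightarrow> \<exists>k'\<in>coord_pair i. k' \<noteq> k"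
  by (auto simp: coord_pair_def)

lemma inj_coord_pair: "inj coord_pair"
proof (rule injI)
  fix i j assume eq: "coord_pair i = coord_pair j"
  have "2*i \<in> coord_pair i"
    by (simp add: coord_pair_def)
  then show "i = j"
    using eq coord_pair_unique by metis
qed

lemma inj_on_coord_pair_compl: "inj_on (coord_pair_compl m) {1..m}"
proof (rule inj_onI)
  fix i j assume i: "i \<in> {1..m}" and j: "j \<in> {1..m}" and "coord_pair_compl m i = coord_pair_compl m j"
  then have "coord_pair i = coord_pair j"
    using coord_pair_subset[OF i] coord_pair_subset[OF j] unfolding coord_pair_compl_def by blast
  then show "i = j"
    using inj_coord_pair by (auto dest: injD)
qed

lemma UN_coord_pair_eq_compl:
  assumes i: "i \<in> {1..m}"
  shows "(\<Union>j\<in>{1..m} - {i}. coord_pair j) = coord_pair_compl m i"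
proof (intro equalityI subsetI)
  fix k assume "k \<in> (\<Union>j\<in>{1..m} - {i}. coord_pair j)"
  then obtain j where j: "j \<in> {1..m}" "j \<noteq> i" "k \<in> coord_pair j"
    by blast
  then have "k \<notin> coord_pair i"
    using coord_pair_unique[of k j i] j(2) by auto
  then show "k \<in> coord_pair_compl m i"
    using coord_pair_subset[OF j(1)] j(3) unfolding coord_pair_compl_def by blast
next
  fix k assume "k \<in> coord_pair_compl m i"
  then have k: "k \<in> {1..2*m}" "k \<notin> coord_pair i"
    unfolding coord_pair_compl_def by blast+
  then have "(k + 1) div 2 \<noteq> i"
    using coord_pair_containing[OF k(1)] by metis
  then show "k \<in> (\<Union>j\<in>{1..m} - {i}. coord_pair j)"
    using coord_pair_containing[OF k(1)] by blast
qed

lemma insert_remove_coord_pair_neq: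
  assumes "1 \<le> i" "k \<notin> coord_pair i" "k' \<in> coord_pair i"
  shows "insert k (coord_pair i) - {k'} \<noteq> coord_pair j"
proof
  assume eq: "insert k (coord_pair i) - {k'} = coord_pair j"
  obtain k'' where "k'' \<in> coord_pair i" "k'' \<noteq> k'"
    using coord_pair_other[of i k'] assms(1,3) by auto
  then have "i = j"
    using eq coord_pair_unique[of k'' i j] by auto
  then show False
    using eq assms(2,3) by blast
qed

lemma insert_remove_coord_pair_compl_neq:
  assumes "i \<in> {1..m}" "j \<in> {1..m}" "k \<in> coord_pair i" "k' \<in> coord_pair_compl m i"
  shows "insert k (coord_pair_compl m i) - {k'} \<noteq> coord_pair_compl m j"
proof
  assume eq: "insert k (coord_pair_compl m i) - {k'} = coord_pair_compl m j"
  obtain k'' where k'': "k'' \<in> coord_pair i" "k'' \<noteq> k"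
    using coord_pair_other[of i k] assms(1,3) by auto
  then have "k'' \<notin> coord_pair_compl m j"
    using eq unfolding coord_pair_compl_def by blast
  then have "k'' \<in> coord_pair j"
    using coord_pair_subset[OF assms(1)] k''(1) unfolding coord_pair_compl_def by blast
  then have "i = j"
    using coord_pair_unique[of k'' i j] k''(1) by auto
  moreover have "k \<in> coord_pair_compl m j"
    using eq assms(3,4) unfolding coord_pair_compl_def by blast
  ultimately show False
    using assms(3) unfolding coord_pair_compl_def by blast
qed

definition block_form :: "nat \<Rightarrow> (nat \<Rightarrow> real) \<Rightarrow> nat set \<Rightarrow> real" where
  "block_form m c = (\<Sum>i\<in>{1..m}. fsmult (c i) (basis_form (coord_pair i)))"

definition cofactor_form :: "nat \<Rightarrow> (nat \<Rightarrow> real) \<Rightarrow> nat set \<Rightarrow> real" where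
  "cofactor_form m c =
     (\<Sum>i\<in>{1..m}. fsmult (- (\<Prod>j\<in>{1..m} - {i}. c j)) (basis_form (coord_pair_compl m i)))"

lemma wedge_dx_coord_pair: "1 \<le> i \<Longrightarrow> wedge (dx (2*i - 1)) (dx (2*i)) = basis_form (coord_pair i)"
  unfolding dx_eq_basis_form coord_pair_def by (subst wedge_basis_form_less) (auto simp: insert_commute)

lemma sum_wedge_dx_eq_block_form:
  "(\<Sum>i\<in>{1..m}. fsmult (c i) (wedge (dx (2*i - 1)) (dx (2*i)))) = block_form m c"
  unfolding block_form_def using wedge_dx_coord_pair by (intro sum.cong) auto

lemma wedges_omit_coord_pair:
  assumes i: "i \<in> {1..m}"
  shows "wedges (map (\<lambda>j. fsmult (c j) (wedge (dx (2*j - 1)) (dx (2*j)))) (filter (\<lambda>j. j \<noteq> i) [1..<m+1]))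
       = fsmult (\<Prod>j\<in>{1..m} - {i}. c j) (basis_form (coord_pair_compl m i))"
proof -
  let ?xs = "filter (\<lambda>j. j \<noteq> i) [1..<m+1]"
  have set_xs: "set ?xs = {1..m} - {i}"
    by auto
  have sorted_xs: "sorted_wrt (<) ?xs"
    by (intro sorted_wrt_filter sorted_wrt_upt)
  have "map (\<lambda>j. fsmult (c j) (wedge (dx (2*j - 1)) (dx (2*j)))) ?xs
      = map (\<lambda>j. fsmult (c j) (basis_form (coord_pair j))) ?xs"
    using wedge_dx_coord_pair by (intro map_cong) auto
  also have "wedges \<dots> = fsmult (\<Prod>j\<in>{1..m} - {i}. c j) (basis_form (\<Union>j\<in>{1..m} - {i}. coord_pair j))"
    unfolding set_xs[symmetric]
    by (rule wedges_basis_forms_sorted[OF sorted_xs]) (auto intro: coord_pair_less)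
  finally show ?thesis
    by (simp only: UN_coord_pair_eq_compl[OF i])
qed

lemma sum_wedges_eq_cofactor_form:
  "(\<Sum>i\<in>{1..m}. - wedges (map (\<lambda>j. fsmult (c j) (wedge (dx (2*j - 1)) (dx (2*j))))
                              (filter (\<lambda>j. j \<noteq> i) [1..<m+1])))
   = cofactor_form m c"
  unfolding cofactor_form_def
proof (intro sum.cong refl)
  fix i assume "i \<in> {1..m}"
  then show "- wedges (map (\<lambda>j. fsmult (c j) (wedge (dx (2*j - 1)) (dx (2*j))))
                           (filter (\<lambda>j. j \<noteq> i) [1..<m+1]))
      = fsmult (- (\<Prod>j\<in>{1..m} - {i}. c j)) (basis_form (coord_pair_compl m i))"
    by (simp only: wedges_omit_coord_pair) (simp add: fsmult_def fun_eq_iff)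
qed

lemma block_form_at: "j \<in> {1..m} \<Longrightarrow> block_form m c (coord_pair j) = c j"
  unfolding block_form_def by (rule sum_fsmult_basis_form_at[OF _ inj_on_subset[OF inj_coord_pair]]) auto

lemma block_form_outside: "L \<notin> coord_pair ` {1..m} \<Longrightarrow> block_form m c L = 0"
  unfolding block_form_def by (rule sum_fsmult_basis_form_outside)

lemma cofactor_form_at:
  "j \<in> {1..m} \<Longrightarrow> cofactor_form m c (coord_pair_compl m j) = - (\<Prod>l\<in>{1..m} - {j}. c l)"
  unfolding cofactor_form_def
  by (rule sum_fsmult_basis_form_at[OF _ inj_on_coord_pair_compl]) auto

lemma cofactor_form_outside: "L \<notin> coord_pair_compl m ` {1..m} \<Longrightarrow> cofactor_form m c L = 0"
  unfolding cofactor_form_def by (rule sum_fsmult_basis_form_outside)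

section \<open>Algebraic type, duality and indivisibility\<close>

definition pair_scaling :: "(nat \<Rightarrow> real) \<Rightarrow> nat \<Rightarrow> real" where
  "pair_scaling t k = (if odd k then t ((k + 1) div 2) else 1)"

lemma pair_scaling_nonzero:
  assumes "\<And>j. j \<in> {1..m} \<Longrightarrow> t j \<noteq> 0" and "k \<in> {1..2*m}"
  shows "pair_scaling t k \<noteq> 0"
proof -
  have j: "(k + 1) div 2 \<in> {1..m}"
    using coord_pair_containing[OF assms(2)] by blast
  show ?thesis
    using assms(1)[OF j] by (metis pair_scaling_def one_neq_zero)
qed

lemma prod_pair_scaling_coord_pair: "1 \<le> j \<Longrightarrow> (\<Prod>k\<in>coord_pair j. pair_scaling t k) = t j"
  by (simp add: coord_pair_def pair_scaling_def)

lemma prod_pair_scaling_coord_pair_compl: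
  assumes i: "i \<in> {1..m}"
  shows "(\<Prod>k\<in>coord_pair_compl m i. pair_scaling t k) = (\<Prod>j\<in>{1..m} - {i}. t j)"
proof -
  have "(\<Prod>k\<in>coord_pair_compl m i. pair_scaling t k)
      = (\<Prod>j\<in>{1..m} - {i}. \<Prod>k\<in>coord_pair j. pair_scaling t k)"
    unfolding UN_coord_pair_eq_compl[OF i, symmetric]
    by (rule prod.UNION_disjoint) (auto dest: coord_pair_unique)
  then show ?thesis
    by (simp add: prod_pair_scaling_coord_pair)
qed

lemma same_type_cofactor_form:
  assumes c: "\<And>j. j \<in> {1..m} \<Longrightarrow> c j \<noteq> 0" and c': "\<And>j. j \<in> {1..m} \<Longrightarrow> c' j \<noteq> 0"
  shows "same_type (2*m) (cofactor_form m c) (cofactor_form m c')"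
proof -
  define t where "t j = c' j / c j" for j
  have "pullback (2*m) (diag_matrix (pair_scaling t)) (cofactor_form m c) L = cofactor_form m c' L" for L
  proof -
    have "cofactor_form m c I \<noteq> 0 \<Longrightarrow> I \<subseteq> {1..2*m}" for I
      using cofactor_form_outside coord_pair_compl_subset by blast
    then have "pullback (2*m) (diag_matrix (pair_scaling t)) (cofactor_form m c) L
        = cofactor_form m c L * (\<Prod>k\<in>L. pair_scaling t k)"
      by (rule pullback_diag_matrix)
    also have "\<dots> = cofactor_form m c' L"
    proof (cases "L \<in> coord_pair_compl m ` {1..m}")
      case True
      then obtain i where i: "i \<in> {1..m}" and L: "L = coord_pair_compl m i"
        by blast
      have "(\<Prod>j\<in>{1..m} - {i}. c j) * (\<Prod>j\<in>{1..m} - {i}. t j) = (\<Prod>j\<in>{1..m} - {i}. c' j)"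
        unfolding prod.distrib[symmetric] using c by (intro prod.cong) (auto simp: t_def)
      then show ?thesis
        using i by (simp add: L cofactor_form_at prod_pair_scaling_coord_pair_compl)
    next
      case False
      then show ?thesis
        by (simp add: cofactor_form_outside)
    qed
    finally show ?thesis .
  qed
  moreover have "invertible_on (2*m) (diag_matrix (pair_scaling t))"
    by (rule invertible_on_diag_matrix, rule pair_scaling_nonzero[where m = m])
      (use c c' in \<open>auto simp: t_def\<close>)
  ultimately show ?thesis
    unfolding same_type_def by blast
qed

lemma is_dual_block_form_cofactor_form:
  assumes c: "\<And>j. j \<in> {1..m} \<Longrightarrow> c j \<noteq> 0"
  shows "is_dual (2*m) (block_form m c) (cofactor_form m c)"
proof -
  define B where "B = diag_matrix (pair_scaling c)"
  define si where "si i = wedge (lin (2*m) B (2*i - 1)) (lin (2*m) B (2*i))" for i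
  have si: "si i = fsmult (c i) (wedge (dx (2*i - 1)) (dx (2*i)))" if "i \<in> {1..m}" for i
  proof -
    have "2*i - 1 \<in> {1..2*m}" "2*i \<in> {1..2*m}"
      "pair_scaling c (2*i - 1) = c i" "pair_scaling c (2*i) = 1"
      using that by (auto simp: pair_scaling_def)
    then show ?thesis
      unfolding si_def B_def
      by (simp add: lin_diag_matrix wedge_fsmult_left wedge_fsmult_right fsmult_fsmult)
  qed
  have "block_form m c = (\<Sum>i\<in>{1..m}. si i)"
    unfolding sum_wedge_dx_eq_block_form[where m = m and c = c, symmetric] by (intro sum.cong) (simp_all add: si)
  moreover have "cofactor_form m c = - (\<Sum>i\<in>{1..m}. wedges (map si (filter (\<lambda>j. j \<noteq> i) [1..<m+1])))"
    unfolding sum_wedges_eq_cofactor_form[where m = m and c = c, symmetric] sum_negf[symmetric]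
    by (intro sum.cong refl arg_cong[where f = uminus] arg_cong[where f = wedges] map_cong)
      (auto simp: si simp del: upt_Suc)
  moreover have "invertible_on (2*m) B"
    unfolding B_def by (rule invertible_on_diag_matrix, rule pair_scaling_nonzero[where m = m]) (use c in auto)
  ultimately show ?thesis
    unfolding is_dual_def Let_def si_def by auto
qed

lemma wedge_cofactor_form_at:
  assumes deg: "form_deg n 1 \<xi>" and i: "i \<in> {1..m}" and k: "k \<in> coord_pair i"
  shows "wedge \<xi> (cofactor_form m c) (insert k (coord_pair_compl m i))
       = - wsign {k} (coord_pair_compl m i) * \<xi> {k} * (\<Prod>j\<in>{1..m} - {i}. c j)"
proof -
  let ?L = "insert k (coord_pair_compl m i)"
  let ?g = "\<lambda>I. wsign I (?L - I) * \<xi> I * cofactor_form m c (?L - I)"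
  have L_k: "?L - {k} = coord_pair_compl m i"
    using k by (auto simp: coord_pair_compl_def)
  have "?g I = 0" if I: "I \<in> Pow ?L - {{k}}" for I
  proof (cases "\<xi> I = 0")
    case False
    then have "card I = 1"
      using deg unfolding form_deg_def by blast
    then obtain k' where I_eq: "I = {k'}"
      by (auto simp: card_1_singleton_iff)
    then have "k' \<in> coord_pair_compl m i"
      using I by blast
    then have "?L - I \<notin> coord_pair_compl m ` {1..m}"
      using insert_remove_coord_pair_compl_neq[OF i _ k] I_eq by blast
    then show ?thesis
      by (simp add: cofactor_form_outside)
  qed simp
  then have "(\<Sum>I\<in>Pow ?L - {{k}}. ?g I) = 0"
    by (rule sum.neutral[OF ballI])
  moreover have "wedge \<xi> (cofactor_form m c) ?L = ?g {k} + (\<Sum>I\<in>Pow ?L - {{k}}. ?g I)"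
    unfolding wedge_def by (rule sum.remove) auto
  ultimately show ?thesis
    by (simp add: L_k cofactor_form_at[OF i])
qed

lemma wedge_cofactor_form_nonzero:
  assumes deg: "form_deg (2*m) 1 \<xi>" and "\<xi> \<noteq> 0" and c: "\<And>j. j \<in> {1..m} \<Longrightarrow> c j \<noteq> 0"
  shows "wedge \<xi> (cofactor_form m c) \<noteq> 0"
proof -
  obtain I where "\<xi> I \<noteq> 0"
    using \<open>\<xi> \<noteq> 0\<close> by (auto simp: fun_eq_iff)
  then have "I \<subseteq> {1..2*m}" "card I = 1" "\<xi> I \<noteq> 0"
    using deg unfolding form_deg_def by blast+
  then obtain k where k: "k \<in> {1..2*m}" "\<xi> {k} \<noteq> 0"
    by (auto simp: card_1_singleton_iff)
  define i where "i = (k + 1) div 2"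
  have i: "i \<in> {1..m}" "k \<in> coord_pair i"
    using coord_pair_containing[OF k(1)] by (simp_all add: i_def)
  have "(\<Prod>j\<in>{1..m} - {i}. c j) \<noteq> 0" "wsign {k} (coord_pair_compl m i) \<noteq> 0"
    using c by (simp_all add: wsign_def)
  then have "wedge \<xi> (cofactor_form m c) (insert k (coord_pair_compl m i)) \<noteq> 0"
    using k(2) by (simp add: wedge_cofactor_form_at[OF deg i])
  then show ?thesis
    by (metis zero_fun_apply)
qed

lemma alg_constant_cofactor_form:
  assumes "\<And>i x. i \<in> {1..m} \<Longrightarrow> x \<in> U \<Longrightarrow> c i x \<noteq> 0"
  shows "alg_constant (2*m) U (\<lambda>x. cofactor_form m (\<lambda>i. c i x))"
  unfolding alg_constant_def using assms by (intro ballI same_type_cofactor_form) auto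

lemma indivisible_cofactor_form:
  assumes "\<And>i x. i \<in> {1..m} \<Longrightarrow> x \<in> U \<Longrightarrow> c i x \<noteq> 0"
  shows "indivisible (2*m) U (\<lambda>x. cofactor_form m (\<lambda>i. c i x))"
  unfolding indivisible_def
proof (intro ballI allI impI)
  fix x \<xi> assume x: "x \<in> U" and \<xi>: "form_deg (2*m) 1 \<xi> \<and> \<xi> \<noteq> 0"
  show "wedge \<xi> (cofactor_form m (\<lambda>i. c i x)) \<noteq> 0"
    using \<xi> assms[OF _ x] by (intro wedge_cofactor_form_nonzero) auto
qed

lemma dual_fields_block_form_cofactor_form:
  assumes "\<And>i x. i \<in> {1..m} \<Longrightarrow> x \<in> U \<Longrightarrow> c i x \<noteq> 0"
  shows "dual_fields (2*m) U (\<lambda>x. block_form m (\<lambda>i. c i x)) (\<lambda>x. cofactor_form m (\<lambda>i. c i x))"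
  unfolding dual_fields_def using assms by (intro ballI is_dual_block_form_cofactor_form) auto

section \<open>Closedness\<close>

lemma closed_on_block_form_iff:
  "closed_on (2*m) U (\<lambda>x. block_form m (\<lambda>i. c i x)) \<longleftrightarrow>
   (\<forall>i\<in>{1..m}. \<forall>k\<in>{1..2*m} - coord_pair i. \<forall>x\<in>U. pderiv k (c i) x = 0)"
proof
  assume closed: "closed_on (2*m) U (\<lambda>x. block_form m (\<lambda>i. c i x))"
  show "\<forall>i\<in>{1..m}. \<forall>k\<in>{1..2*m} - coord_pair i. \<forall>x\<in>U. pderiv k (c i) x = 0"
  proof (intro ballI)
    fix i k x assume i: "i \<in> {1..m}" and k: "k \<in> {1..2*m} - coord_pair i" and x: "x \<in> U"
    show "pderiv k (c i) x = 0"
    proof (rule pderiv_eq_0_if_dform_eq_0[where S = "{1..m}" and T = coord_pair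
          and w = "\<lambda>x. block_form m (\<lambda>i. c i x)" and K = "insert k (coord_pair i)"])
      show "k' \<in> insert k (coord_pair i) \<Longrightarrow> k' \<noteq> k \<Longrightarrow>
          insert k (coord_pair i) - {k'} \<notin> coord_pair ` {1..m}" for k'
        using insert_remove_coord_pair_neq[of i k] i k by auto
      show "dform (\<lambda>x. block_form m (\<lambda>i. c i x)) x (insert k (coord_pair i)) = 0"
        using closed x k coord_pair_subset[OF i] unfolding closed_on_def by blast
    qed (use i k in \<open>auto simp: block_form_at block_form_outside\<close>)
  qed
next
  assume h: "\<forall>i\<in>{1..m}. \<forall>k\<in>{1..2*m} - coord_pair i. \<forall>x\<in>U. pderiv k (c i) x = 0"
  show "closed_on (2*m) U (\<lambda>x. block_form m (\<lambda>i. c i x))"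
    unfolding closed_on_def
  proof (intro ballI allI impI)
    fix x K assume x: "x \<in> U" and K: "K \<subseteq> {1..2*m}"
    show "dform (\<lambda>x. block_form m (\<lambda>i. c i x)) x K = 0"
    proof (rule dform_eq_0[where S = "{1..m}" and T = coord_pair and f = c])
      fix k j assume "k \<in> K" "j \<in> {1..m}" "K - {k} = coord_pair j"
      then show "pderiv k (c j) x = 0"
        using h x K by blast
    qed (auto simp: block_form_at block_form_outside)
  qed
qed

lemma closed_on_cofactor_form_iff:
  "closed_on (2*m) U (\<lambda>x. cofactor_form m (\<lambda>i. c i x)) \<longleftrightarrow>
   (\<forall>i\<in>{1..m}. \<forall>k\<in>coord_pair i. \<forall>x\<in>U. pderiv k (\<lambda>y. - (\<Prod>j\<in>{1..m} - {i}. c j y)) x = 0)"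
proof
  assume closed: "closed_on (2*m) U (\<lambda>x. cofactor_form m (\<lambda>i. c i x))"
  show "\<forall>i\<in>{1..m}. \<forall>k\<in>coord_pair i. \<forall>x\<in>U. pderiv k (\<lambda>y. - (\<Prod>j\<in>{1..m} - {i}. c j y)) x = 0"
  proof (intro ballI)
    fix i k x assume i: "i \<in> {1..m}" and k: "k \<in> coord_pair i" and x: "x \<in> U"
    show "pderiv k (\<lambda>y. - (\<Prod>j\<in>{1..m} - {i}. c j y)) x = 0"
    proof (rule pderiv_eq_0_if_dform_eq_0[where S = "{1..m}" and T = "coord_pair_compl m"
          and f = "\<lambda>i y. - (\<Prod>j\<in>{1..m} - {i}. c j y)"
          and w = "\<lambda>x. cofactor_form m (\<lambda>i. c i x)" and K = "insert k (coord_pair_compl m i)"])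
      show "k' \<in> insert k (coord_pair_compl m i) \<Longrightarrow> k' \<noteq> k \<Longrightarrow>
          insert k (coord_pair_compl m i) - {k'} \<notin> coord_pair_compl m ` {1..m}" for k'
        using insert_remove_coord_pair_compl_neq[OF i _ k] by blast
      have "insert k (coord_pair_compl m i) \<subseteq> {1..2*m}"
        using k coord_pair_subset[OF i] coord_pair_compl_subset by blast
      then show "dform (\<lambda>x. cofactor_form m (\<lambda>i. c i x)) x (insert k (coord_pair_compl m i)) = 0"
        using closed x unfolding closed_on_def by blast
      show "insert k (coord_pair_compl m i) - {k} = coord_pair_compl m i"
        using k by (auto simp: coord_pair_compl_def)
    qed (use i in \<open>auto simp: cofactor_form_at cofactor_form_outside\<close>)
  qed
next
  assume h: "\<forall>i\<in>{1..m}. \<forall>k\<in>coord_pair i. \<forall>x\<in>U.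
    pderiv k (\<lambda>y. - (\<Prod>j\<in>{1..m} - {i}. c j y)) x = 0"
  show "closed_on (2*m) U (\<lambda>x. cofactor_form m (\<lambda>i. c i x))"
    unfolding closed_on_def
  proof (intro ballI allI impI)
    fix x K assume x: "x \<in> U" and K: "K \<subseteq> {1..2*m}"
    show "dform (\<lambda>x. cofactor_form m (\<lambda>i. c i x)) x K = 0"
    proof (rule dform_eq_0[where S = "{1..m}" and T = "coord_pair_compl m"
          and f = "\<lambda>i y. - (\<Prod>j\<in>{1..m} - {i}. c j y)"])
      fix k j assume "k \<in> K" "j \<in> {1..m}" "K - {k} = coord_pair_compl m j"
      then have "k \<in> coord_pair j"
        using K unfolding coord_pair_compl_def by blast
      then show "pderiv k (\<lambda>y. - (\<Prod>l\<in>{1..m} - {j}. c l y)) x = 0"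
        using h x \<open>j \<in> {1..m}\<close> by blast
    qed (auto simp: cofactor_form_at cofactor_form_outside)
  qed
qed

section \<open>Functions with vanishing partial derivatives\<close>

lemma Rn_fun_upd: "x \<in> Rn n \<Longrightarrow> k \<in> {1..n} \<Longrightarrow> x(k := t) \<in> Rn n"
  by (auto simp: Rn_def)

lemma eventually_fun_upd_in_open:
  assumes U: "open_Rn n U" and x: "x \<in> U" and k: "k \<in> {1..n}"
  shows "eventually (\<lambda>t. x(k := t) \<in> U) (nhds (x k))"
proof -
  obtain T where T: "open T" "U = Rn n \<inter> T"
    using U by (auto simp: open_Rn_def openin_open)
  have cont: "continuous_on UNIV (\<lambda>t::real. x(k := t))"
  proof (intro continuous_on_coordinatewise_then_product)
    fix i show "continuous_on UNIV (\<lambda>t::real. (x(k := t)) i)"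
      by (cases "i = k") (auto intro: continuous_intros)
  qed
  have "open ((\<lambda>t::real. x(k := t)) -` T)"
    by (rule open_vimage[OF T(1) cont])
  moreover have "x k \<in> (\<lambda>t::real. x(k := t)) -` T"
    using x T by auto
  ultimately have "eventually (\<lambda>t. x(k := t) \<in> T) (nhds (x k))"
    using eventually_nhds_in_open by fastforce
  then show ?thesis
    using x T Rn_fun_upd[OF _ k] by (auto elim!: eventually_mono)
qed

definition coord_box :: "nat \<Rightarrow> (nat \<Rightarrow> real) \<Rightarrow> real \<Rightarrow> (nat \<Rightarrow> real) set" where
  "coord_box n p \<epsilon> = {y \<in> Rn n. \<forall>k\<in>{1..n}. \<bar>y k - p k\<bar> < \<epsilon>}"

lemma open_Rn_coord_box: "open_Rn n (coord_box n p \<epsilon>)"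
proof -
  have "open {f::nat \<Rightarrow> real. \<forall>i\<in>{1..n}. f (id i) \<in> ball (p i) \<epsilon>}"
    by (rule product_topology_basis') auto
  moreover have "coord_box n p \<epsilon> =
      Rn n \<inter> {f::nat \<Rightarrow> real. \<forall>i\<in>{1..n}. f (id i) \<in> ball (p i) \<epsilon>}"
    by (auto simp: coord_box_def dist_real_def abs_minus_commute)
  ultimately show ?thesis
    unfolding open_Rn_def by (auto simp: openin_open coord_box_def)
qed

lemma center_in_coord_box: "p \<in> Rn n \<Longrightarrow> \<epsilon> > 0 \<Longrightarrow> p \<in> coord_box n p \<epsilon>"
  by (simp add: coord_box_def)

lemma coord_box_subset_open:
  assumes U: "open_Rn n U" and p: "p \<in> U"
  obtains \<epsilon> where "\<epsilon> > 0" "coord_box n p \<epsilon> \<subseteq> U"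
proof -
  have sub: "U \<subseteq> Rn n"
    using U by (simp add: open_Rn_def)
  obtain T where T: "open T" "U = Rn n \<inter> T"
    using U by (auto simp: open_Rn_def openin_open)
  have "openin (product_topology (\<lambda>i. euclidean) UNIV) T"
    using T(1) by (simp add: open_fun_def)
  from product_topology_open_contains_basis[OF this, of p] p T
  obtain X where X: "p \<in> (\<Pi>\<^sub>E i\<in>UNIV. X i)" "\<And>i. open (X i)" "(\<Pi>\<^sub>E i\<in>UNIV. X i) \<subseteq> T"
    by auto
  have "\<forall>k. \<exists>e>0. ball (p k) e \<subseteq> X k"
    using X(1,2) by (auto simp: open_contains_ball)
  then obtain e where e: "\<And>k. e k > 0" "\<And>k. ball (p k) (e k) \<subseteq> X k"
    by metis
  \<comment> \<open>\<open>insert 1\<close> keeps the set nonempty when \<open>n = 0\<close>\<close>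
  define \<epsilon> where "\<epsilon> = Min (insert 1 (e ` {1..n}))"
  have "\<epsilon> > 0"
    unfolding \<epsilon>_def using e(1) by (subst Min_gr_iff) auto
  moreover have "coord_box n p \<epsilon> \<subseteq> U"
  proof
    fix y assume y: "y \<in> coord_box n p \<epsilon>"
    have "y i \<in> X i" for i
    proof (cases "i \<in> {1..n}")
      case True
      then have "\<epsilon> \<le> e i"
        unfolding \<epsilon>_def by (intro Min_le) auto
      moreover have "\<bar>y i - p i\<bar> < \<epsilon>"
        using y True by (simp add: coord_box_def)
      ultimately have "y i \<in> ball (p i) (e i)"
        by (simp add: dist_real_def abs_minus_commute)
      then show ?thesis
        using e(2) by blast
    next
      case False
      then have "y i = p i"
        using y p sub by (auto simp: coord_box_def Rn_def)
      then show ?thesis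
        using X(1) by auto
    qed
    then show "y \<in> U"
      using X(3) T(2) y by (auto simp: coord_box_def PiE_UNIV_domain)
  qed
  ultimately show ?thesis
    using that by blast
qed

lemma coord_box_fun_upd_eq:
  assumes k: "k \<in> {1..n}" and y: "y \<in> coord_box n p \<epsilon>" and s: "\<bar>s - p k\<bar> < \<epsilon>"
    and h: "\<And>z. z \<in> coord_box n p \<epsilon> \<Longrightarrow>
      (\<lambda>t. f (z(k := t))) differentiable (at (z k)) \<and> pderiv k f z = 0"
  shows "f (y(k := s)) = f y"
proof -
  define g where "g t = f (y(k := t))" for t
  have "(g has_field_derivative 0) (at t within ball (p k) \<epsilon>)" if t: "t \<in> ball (p k) \<epsilon>" for t
  proof -
    have z: "y(k := t) \<in> coord_box n p \<epsilon>"
      using y t k Rn_fun_upd[of y n k t] by (auto simp: coord_box_def dist_real_def abs_minus_commute)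
    have "(\<lambda>u. f ((y(k := t))(k := u))) = g"
      by (simp add: g_def fun_eq_iff)
    then have "g differentiable (at t)" "deriv g t = 0"
      using h[OF z] by (simp_all add: pderiv_def)
    then show ?thesis
      by (simp add: DERIV_deriv_iff_real_differentiable[symmetric] has_field_derivative_at_within)
  qed
  then obtain c where "\<forall>t\<in>ball (p k) \<epsilon>. g t = c"
    using has_field_derivative_zero_constant[of "ball (p k) \<epsilon>" g] by auto
  moreover have "y k \<in> ball (p k) \<epsilon>" "s \<in> ball (p k) \<epsilon>"
    using y k s by (auto simp: coord_box_def dist_real_def abs_minus_commute)
  ultimately have "g s = g (y k)"
    by simp
  then show ?thesis
    by (simp add: g_def)
qed

lemma coord_box_override_eq:
  assumes "finite C" "C \<subseteq> {1..n}" and p: "p \<in> Rn n" and "\<epsilon> > 0"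
    and h: "\<And>k z. k \<in> C \<Longrightarrow> z \<in> coord_box n p \<epsilon> \<Longrightarrow>
      (\<lambda>t. f (z(k := t))) differentiable (at (z k)) \<and> pderiv k f z = 0"
  shows "y \<in> coord_box n p \<epsilon> \<Longrightarrow> f (\<lambda>l. if l \<in> C then p l else y l) = f y"
  using assms(1,2) h
proof (induction C arbitrary: y rule: finite_induct)
  case empty
  then show ?case
    by simp
next
  case (insert c C)
  define z where "z l = (if l \<in> C then p l else y l)" for l
  have z: "z \<in> coord_box n p \<epsilon>"
    using insert.prems(1) p \<open>\<epsilon> > 0\<close> by (auto simp: coord_box_def z_def Rn_def)
  have "f (\<lambda>l. if l \<in> insert c C then p l else y l) = f (z(c := p c))"
    by (rule arg_cong[where f = f]) (auto simp: z_def)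
  also have "f (z(c := p c)) = f z"
    using insert.prems insert.hyps \<open>\<epsilon> > 0\<close> by (intro coord_box_fun_upd_eq[OF _ z]) auto
  also have "f z = f y"
    unfolding z_def using insert by auto
  finally show ?case .
qed

lemma prod_remove_powr_mult_prod:
  fixes a :: "nat \<Rightarrow> real"
  assumes fin: "finite S" and i: "i \<in> S" and card: "card S = m"
    and pos: "\<And>l. l \<in> S \<Longrightarrow> a l > 0"
  shows "(\<Prod>j\<in>S - {i}. a j powr (1 - real m) * (\<Prod>l\<in>S. a l)) = a i ^ (m - 1)"
proof -
  define Q where "Q = (\<Prod>j\<in>S - {i}. a j)"
  have Q: "Q > 0"
    unfolding Q_def using pos by (intro prod_pos) auto
  have "m \<noteq> 0"
    using card i fin by (auto simp: card_gt_0_iff)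
  have "(\<Prod>j\<in>S - {i}. a j powr (1 - real m) * (\<Prod>l\<in>S. a l))
      = (\<Prod>j\<in>S - {i}. a j powr (1 - real m)) * (\<Prod>l\<in>S. a l) ^ (m - 1)"
    using card i fin by (simp add: prod.distrib)
  also have "\<dots> = Q powr (1 - real m) * (a i * Q) ^ (m - 1)"
    unfolding Q_def prod_powr_distrib[symmetric] using prod.remove[OF fin i, of a] by simp
  also have "Q powr (1 - real m) * (a i * Q) ^ (m - 1)
      = a i ^ (m - 1) * (Q powr (1 - real m) * Q powr real (m - 1))"
    using Q by (simp add: power_mult_distrib powr_realpow)
  also have "Q powr (1 - real m) * Q powr real (m - 1) = Q powr 0"
    using \<open>m \<noteq> 0\<close> by (simp add: powr_add[symmetric] of_nat_diff)
  finally show ?thesis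
    using Q by simp
qed

lemma cofactor_product_powr_mult_prod:
  fixes a r :: "nat \<Rightarrow> real"
  assumes fin: "finite S" and i: "i \<in> S" and card: "card S = m" and m: "m \<ge> 2"
    and a: "\<And>j. j \<in> S \<Longrightarrow> a j = (\<Prod>l\<in>S - {j}. r l)"
    and pos: "\<And>l. l \<in> S \<Longrightarrow> a l > 0"
  shows "a i powr (1 - real m) * (\<Prod>j\<in>S. a j) = r i ^ (m - 1)"
proof -
  define R where "R = (\<Prod>l\<in>S. r l)"
  have aR: "a j * r j = R" if "j \<in> S" for j
    using prod.remove[OF fin that, of r] a[OF that] by (simp add: R_def mult.commute)
  obtain j where j: "j \<in> S" "j \<noteq> i"
    using card m i fin by (metis card_le_Suc0_iff_eq not_less_eq_eq numeral_2_eq_2)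
  have "r i \<noteq> 0"
  proof
    assume "r i = 0"
    then have "(\<Prod>l\<in>S - {j}. r l) = 0"
      using i j(2) fin by (intro prod_zero) auto
    then show False
      using a[OF j(1)] pos[OF j(1)] by simp
  qed
  then have R: "R \<noteq> 0"
    using aR[OF i] pos[OF i] by auto
  have "(\<Prod>j\<in>S. a j) * R = (\<Prod>j\<in>S. a j * r j)"
    by (simp add: R_def prod.distrib)
  also have "\<dots> = R ^ m"
    using aR card by simp
  also have "\<dots> = R ^ (m - 1) * R"
    using m by (simp add: power_eq_if)
  finally have prod_a: "(\<Prod>j\<in>S. a j) = R ^ (m - 1)"
    using R by simp
  have "a i powr (1 - real m) = inverse (a i ^ (m - 1))"
    using m pos[OF i] by (simp add: of_nat_diff powr_minus[symmetric] powr_realpow[symmetric])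
  then have "a i powr (1 - real m) * (\<Prod>j\<in>S. a j) = R ^ (m - 1) / a i ^ (m - 1)"
    by (simp add: prod_a divide_inverse mult.commute)
  also have "\<dots> = (R / a i) ^ (m - 1)"
    by (simp add: power_divide)
  also have "R / a i = r i"
    using aR[OF i] pos[OF i] by (auto simp: field_simps)
  finally show ?thesis .
qed

locale positive_smooth_factors =
  fixes m :: nat and U :: "(nat \<Rightarrow> real) set" and \<phi> :: "nat \<Rightarrow> (nat \<Rightarrow> real) \<Rightarrow> real"
  assumes m_ge_2: "m \<ge> 2"
    and open_U: "open_Rn (2*m) U"
    and \<phi>_pos: "\<And>i x. i \<in> {1..m} \<Longrightarrow> x \<in> U \<Longrightarrow> \<phi> i x > 0"
    and \<phi>_smooth: "\<And>i. i \<in> {1..m} \<Longrightarrow> smooth_on (2*m) U (\<phi> i)"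
begin

definition \<psi> :: "nat \<Rightarrow> (nat \<Rightarrow> real) \<Rightarrow> real" where
  "\<psi> i y = \<phi> i y powr (1 - real m) * (\<Prod>l\<in>{1..m}. \<phi> l y)"

lemma \<psi>_pos:
  assumes "i \<in> {1..m}" "y \<in> U"
  shows "\<psi> i y > 0"
  unfolding \<psi>_def using \<phi>_pos[OF assms] \<phi>_pos assms(2) by (intro mult_pos_pos prod_pos) auto

lemma prod_\<psi>_remove:
  "i \<in> {1..m} \<Longrightarrow> y \<in> U \<Longrightarrow> (\<Prod>j\<in>{1..m} - {i}. \<psi> j y) = \<phi> i y ^ (m - 1)"
  unfolding \<psi>_def by (rule prod_remove_powr_mult_prod) (auto intro: \<phi>_pos)

lemma \<phi>_eq_prod_root_\<psi>:
  assumes i: "i \<in> {1..m}" and y: "y \<in> U"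
  shows "\<phi> i y = (\<Prod>j\<in>{1..m} - {i}. \<psi> j y powr (1 / real (m - 1)))"
proof -
  have "(\<Prod>j\<in>{1..m} - {i}. \<psi> j y powr (1 / real (m - 1))) = (\<phi> i y ^ (m - 1)) powr (1 / real (m - 1))"
    by (simp only: prod_powr_distrib[symmetric] prod_\<psi>_remove[OF i y])
  also have "\<dots> = (\<phi> i y powr real (m - 1)) powr (1 / real (m - 1))"
    using \<phi>_pos[OF i y] by (simp add: powr_realpow)
  also have "\<dots> = \<phi> i y"
    using m_ge_2 \<phi>_pos[OF i y] by (simp add: powr_powr)
  finally show ?thesis ..
qed

lemma \<phi>_has_pderiv:
  assumes "l \<in> {1..m}" "y \<in> U" "k \<in> {1..2*m}"
  shows "((\<lambda>t. \<phi> l (y(k := t))) has_field_derivative pderiv k (\<phi> l) y) (at (y k))"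
proof -
  have "(\<lambda>t. \<phi> l (y(k := t))) differentiable (at (y k))"
    using \<phi>_smooth[OF assms(1)] assms(2,3) unfolding smooth_on_def
    by (metis empty_subsetI empty_set ipd.simps(1))
  then show ?thesis
    by (simp add: pderiv_def DERIV_deriv_iff_real_differentiable)
qed

lemma \<psi>_differentiable_along:
  assumes i: "i \<in> {1..m}" and y: "y \<in> U" and k: "k \<in> {1..2*m}"
  shows "(\<lambda>t. \<psi> i (y(k := t))) differentiable (at (y k))"
proof -
  have "(\<lambda>t. \<phi> i (y(k := t)) powr (1 - real m)) differentiable (at (y k))"
    using DERIV_fun_powr[OF \<phi>_has_pderiv[OF i y k], of "1 - real m"] \<phi>_pos[OF i y]
    by (auto simp: real_differentiable_def)
  moreover have "((\<lambda>t. \<Prod>l\<in>{1..m}. \<phi> l (y(k := t))) has_derivative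
      (\<lambda>h. \<Sum>l\<in>{1..m}. (pderiv k (\<phi> l) y * h) * (\<Prod>j\<in>{1..m} - {l}. \<phi> j (y(k := y k))))) (at (y k))"
    by (rule has_derivative_prod) (use \<phi>_has_pderiv[OF _ y k] in \<open>auto simp: has_field_derivative_def\<close>)
  then have "(\<lambda>t. \<Prod>l\<in>{1..m}. \<phi> l (y(k := t))) differentiable (at (y k))"
    by (rule differentiableI)
  ultimately show ?thesis
    unfolding \<psi>_def by (rule differentiable_mult)
qed

lemma pderiv_cofactor_\<psi>_eq_0_iff:
  assumes i: "i \<in> {1..m}" and x: "x \<in> U" and k: "k \<in> {1..2*m}"
  shows "pderiv k (\<lambda>y. - (\<Prod>j\<in>{1..m} - {i}. \<psi> j y)) x = 0 \<longleftrightarrow> pderiv k (\<phi> i) x = 0"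
proof -
  have "\<forall>\<^sub>F t in nhds (x k). - (\<Prod>j\<in>{1..m} - {i}. \<psi> j (x(k := t))) = - (\<phi> i (x(k := t)) ^ (m - 1))"
    using eventually_fun_upd_in_open[OF open_U x k]
    by (rule eventually_mono) (use prod_\<psi>_remove[OF i] in simp)
  then have "pderiv k (\<lambda>y. - (\<Prod>j\<in>{1..m} - {i}. \<psi> j y)) x
      = deriv (\<lambda>t. - (\<phi> i (x(k := t)) ^ (m - 1))) (x k)"
    unfolding pderiv_def by (rule deriv_cong_ev) simp
  also have "\<dots> = - (real (m - 1) * (pderiv k (\<phi> i) x * \<phi> i x ^ (m - 1 - Suc 0)))"
    using DERIV_minus[OF DERIV_power[OF \<phi>_has_pderiv[OF i x k], of "m - 1"]]
    by (intro DERIV_imp_deriv) simp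
  finally show ?thesis
    using m_ge_2 \<phi>_pos[OF i x] by simp
qed

lemma closed_on_cofactor_\<psi>_iff:
  "closed_on (2*m) U (\<lambda>x. cofactor_form m (\<lambda>i. \<psi> i x)) \<longleftrightarrow>
   (\<forall>i\<in>{1..m}. \<forall>x\<in>U. pderiv (2*i - 1) (\<phi> i) x = 0 \<and> pderiv (2*i) (\<phi> i) x = 0)"
proof -
  have "(\<forall>k\<in>coord_pair i. pderiv k (\<lambda>y. - (\<Prod>j\<in>{1..m} - {i}. \<psi> j y)) x = 0)
      \<longleftrightarrow> pderiv (2*i - 1) (\<phi> i) x = 0 \<and> pderiv (2*i) (\<phi> i) x = 0"
    if "i \<in> {1..m}" "x \<in> U" for i x
    using pderiv_cofactor_\<psi>_eq_0_iff[OF that] coord_pair_subset[OF that(1)]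
    by (auto simp: coord_pair_def)
  then show ?thesis
    unfolding closed_on_cofactor_form_iff by blast
qed

lemma \<psi>_eq_on_coord_box:
  assumes h: "\<forall>i\<in>{1..m}. \<forall>k\<in>{1..2*m} - coord_pair i. \<forall>x\<in>U. pderiv k (\<psi> i) x = 0"
    and p: "p \<in> Rn (2*m)" and \<epsilon>: "\<epsilon> > 0" "coord_box (2*m) p \<epsilon> \<subseteq> U"
    and j: "j \<in> {1..m}" and x: "x \<in> coord_box (2*m) p \<epsilon>"
  shows "\<psi> j x = \<psi> j (p(2*j - 1 := x (2*j - 1), 2*j := x (2*j)))"
proof -
  let ?C = "{1..2*m} - coord_pair j"
  have "\<psi> j (\<lambda>l. if l \<in> ?C then p l else x l) = \<psi> j x"
  proof (rule coord_box_override_eq[OF _ _ p \<epsilon>(1) _ x])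
    fix k z assume "k \<in> ?C" "z \<in> coord_box (2*m) p \<epsilon>"
    then show "(\<lambda>t. \<psi> j (z(k := t))) differentiable (at (z k)) \<and> pderiv k (\<psi> j) z = 0"
      using \<psi>_differentiable_along[OF j] h j \<epsilon>(2) by blast
  qed auto
  moreover have "(\<lambda>l. if l \<in> ?C then p l else x l) = p(2*j - 1 := x (2*j - 1), 2*j := x (2*j))"
    using x p by (auto simp: fun_eq_iff coord_box_def Rn_def coord_pair_def)
  ultimately show ?thesis
    by simp
qed

lemma locally_factorizable_if_pderiv_\<psi>_eq_0:
  assumes h: "\<forall>i\<in>{1..m}. \<forall>k\<in>{1..2*m} - coord_pair i. \<forall>x\<in>U. pderiv k (\<psi> i) x = 0"
    and p: "p \<in> U"
  shows "\<exists>V. open_Rn (2*m) V \<and> p \<in> V \<and> V \<subseteq> U \<and>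
      (\<exists>\<rho> :: nat \<Rightarrow> real \<Rightarrow> real \<Rightarrow> real. \<forall>i\<in>{1..m}. \<forall>x\<in>V.
         \<phi> i x = (\<Prod>j\<in>{1..m} - {i}. \<rho> j (x (2*j - 1)) (x (2*j))))"
proof -
  have p_Rn: "p \<in> Rn (2*m)"
    using p open_U by (auto simp: open_Rn_def)
  obtain \<epsilon> where \<epsilon>: "\<epsilon> > 0" "coord_box (2*m) p \<epsilon> \<subseteq> U"
    using coord_box_subset_open[OF open_U p] by blast
  define V where "V = coord_box (2*m) p \<epsilon>"
  define \<rho> where "\<rho> j a b = \<psi> j (p(2*j - 1 := a, 2*j := b)) powr (1 / real (m - 1))" for j a b
  have "\<phi> i x = (\<Prod>j\<in>{1..m} - {i}. \<rho> j (x (2*j - 1)) (x (2*j)))" if i: "i \<in> {1..m}" and x: "x \<in> V" for i x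
  proof -
    have "\<phi> i x = (\<Prod>j\<in>{1..m} - {i}. \<psi> j x powr (1 / real (m - 1)))"
      using \<phi>_eq_prod_root_\<psi>[OF i] x \<epsilon>(2) by (auto simp: V_def)
    also have "\<dots> = (\<Prod>j\<in>{1..m} - {i}. \<rho> j (x (2*j - 1)) (x (2*j)))"
      using \<psi>_eq_on_coord_box[OF h p_Rn \<epsilon>] x by (intro prod.cong) (auto simp: \<rho>_def V_def)
    finally show ?thesis .
  qed
  moreover have "open_Rn (2*m) V" "p \<in> V" "V \<subseteq> U"
    using open_Rn_coord_box center_in_coord_box[OF p_Rn \<epsilon>(1)] \<epsilon>(2) by (simp_all add: V_def)
  ultimately show ?thesis
    by blast
qed

lemma pderiv_\<psi>_eq_0_if_locally_factorizable:
  assumes h: "\<forall>p\<in>U. \<exists>V. open_Rn (2*m) V \<and> p \<in> V \<and> V \<subseteq> U \<and>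
      (\<exists>\<rho> :: nat \<Rightarrow> real \<Rightarrow> real \<Rightarrow> real. \<forall>i\<in>{1..m}. \<forall>x\<in>V.
         \<phi> i x = (\<Prod>j\<in>{1..m} - {i}. \<rho> j (x (2*j - 1)) (x (2*j))))"
    and i: "i \<in> {1..m}" and k: "k \<in> {1..2*m} - coord_pair i" and x: "x \<in> U"
  shows "pderiv k (\<psi> i) x = 0"
proof -
  obtain V and \<rho> :: "nat \<Rightarrow> real \<Rightarrow> real \<Rightarrow> real"
    where V: "open_Rn (2*m) V" "x \<in> V" "V \<subseteq> U"
      and \<rho>: "\<forall>i\<in>{1..m}. \<forall>y\<in>V. \<phi> i y = (\<Prod>j\<in>{1..m} - {i}. \<rho> j (y (2*j - 1)) (y (2*j)))"
    using h x by blast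
  have \<psi>_eq: "\<psi> i y = \<rho> i (y (2*i - 1)) (y (2*i)) ^ (m - 1)" if y: "y \<in> V" for y
    unfolding \<psi>_def
  proof (rule cofactor_product_powr_mult_prod[where a = "\<lambda>j. \<phi> j y" and r = "\<lambda>l. \<rho> l (y (2*l - 1)) (y (2*l))"])
    show "\<And>j. j \<in> {1..m} \<Longrightarrow> \<phi> j y = (\<Prod>l\<in>{1..m} - {j}. \<rho> l (y (2*l - 1)) (y (2*l)))"
      using \<rho> y by blast
    show "\<And>l. l \<in> {1..m} \<Longrightarrow> \<phi> l y > 0"
      using \<phi>_pos y V(3) by blast
  qed (use i m_ge_2 in auto)
  have k_range: "k \<in> {1..2*m}" and "k \<noteq> 2*i - 1" "k \<noteq> 2*i"
    using k by (auto simp: coord_pair_def)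
  have "\<forall>\<^sub>F t in nhds (x k). x(k := t) \<in> V"
    by (rule eventually_fun_upd_in_open[OF V(1,2) k_range])
  then have "\<forall>\<^sub>F t in nhds (x k). \<psi> i (x(k := t)) = \<rho> i (x (2*i - 1)) (x (2*i)) ^ (m - 1)"
  proof (rule eventually_mono)
    fix t assume "x(k := t) \<in> V"
    from \<psi>_eq[OF this] show "\<psi> i (x(k := t)) = \<rho> i (x (2*i - 1)) (x (2*i)) ^ (m - 1)"
      using \<open>k \<noteq> 2*i - 1\<close> \<open>k \<noteq> 2*i\<close> by simp
  qed
  then have "pderiv k (\<psi> i) x = deriv (\<lambda>t. \<rho> i (x (2*i - 1)) (x (2*i)) ^ (m - 1)) (x k)"
    unfolding pderiv_def by (rule deriv_cong_ev) simp
  then show ?thesis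
    by simp
qed

lemma pderiv_\<psi>_eq_0_iff_locally_factorizable:
  "(\<forall>i\<in>{1..m}. \<forall>k\<in>{1..2*m} - coord_pair i. \<forall>x\<in>U. pderiv k (\<psi> i) x = 0) \<longleftrightarrow>
   (\<forall>p\<in>U. \<exists>V. open_Rn (2*m) V \<and> p \<in> V \<and> V \<subseteq> U \<and>
      (\<exists>\<rho> :: nat \<Rightarrow> real \<Rightarrow> real \<Rightarrow> real. \<forall>i\<in>{1..m}. \<forall>x\<in>V.
         \<phi> i x = (\<Prod>j\<in>{1..m} - {i}. \<rho> j (x (2*j - 1)) (x (2*j)))))"
  using locally_factorizable_if_pderiv_\<psi>_eq_0 pderiv_\<psi>_eq_0_if_locally_factorizable by blast

end

theorem theorem16p1:
  fixes m :: nat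
    and U :: "(nat \<Rightarrow> real) set"
    and \<phi> :: "nat \<Rightarrow> (nat \<Rightarrow> real) \<Rightarrow> real"
    and \<Phi> :: "(nat \<Rightarrow> real) \<Rightarrow> real"
    and \<sigma>i :: "nat \<Rightarrow> (nat \<Rightarrow> real) \<Rightarrow> nat set \<Rightarrow> real"
    and \<sigma> \<zeta> :: "(nat \<Rightarrow> real) \<Rightarrow> nat set \<Rightarrow> real"
  assumes m2: "m \<ge> 2"
    and U_open: "open_Rn (2*m) U"
    and \<phi>_pos: "\<And>i x. i \<in> {1..m} \<Longrightarrow> x \<in> U \<Longrightarrow> \<phi> i x > 0"
    and \<phi>_smooth: "\<And>i. i \<in> {1..m} \<Longrightarrow> smooth_on (2*m) U (\<phi> i)"
    and \<Phi>_def: "\<Phi> = (\<lambda>x. \<Prod>i\<in>{1..m}. \<phi> i x)"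
    and \<sigma>i_def: "\<sigma>i = (\<lambda>i x. fsmult (\<phi> i x powr (1 - real m) * \<Phi> x)
                                  (wedge (dx (2*i - 1)) (dx (2*i))))"
    and \<sigma>_def: "\<sigma> = (\<lambda>x. \<Sum>i\<in>{1..m}. \<sigma>i i x)"
    and \<zeta>_def: "\<zeta> = (\<lambda>x. \<Sum>i\<in>{1..m}.
                         - wedges (map (\<lambda>j. \<sigma>i j x) (filter (\<lambda>j. j \<noteq> i) [1..<m+1])))"
  shows "(alg_constant (2*m) U \<zeta> \<and> indivisible (2*m) U \<zeta>)
       \<and> dual_fields (2*m) U \<sigma> \<zeta>
       \<and> (closed_on (2*m) U \<zeta> \<longleftrightarrow>
            (\<forall>i\<in>{1..m}. \<forall>x\<in>U. pderiv (2*i - 1) (\<phi> i) x = 0 \<and> pderiv (2*i) (\<phi> i) x = 0))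
       \<and> (closed_on (2*m) U \<sigma> \<longleftrightarrow>
            (\<forall>i\<in>{1..m}. \<forall>k\<in>{1..2*m} - {2*i - 1, 2*i}. \<forall>x\<in>U.
               pderiv k (\<lambda>y. \<phi> i y powr (1 - real m) * \<Phi> y) x = 0))
       \<and> ((\<forall>i\<in>{1..m}. \<forall>k\<in>{1..2*m} - {2*i - 1, 2*i}. \<forall>x\<in>U.
               pderiv k (\<lambda>y. \<phi> i y powr (1 - real m) * \<Phi> y) x = 0) \<longleftrightarrow>
          (\<forall>p\<in>U. \<exists>V. open_Rn (2*m) V \<and> p \<in> V \<and> V \<subseteq> U \<and>
             (\<exists>\<rho> :: nat \<Rightarrow> real \<Rightarrow> real \<Rightarrow> real. \<forall>i\<in>{1..m}. \<forall>x\<in>V.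
                \<phi> i x = (\<Prod>j\<in>{1..m} - {i}. \<rho> j (x (2*j - 1)) (x (2*j))))))"
proof -
  interpret positive_smooth_factors m U \<phi>
    using m2 U_open \<phi>_pos \<phi>_smooth by unfold_locales
  have \<psi>_eq: "(\<lambda>y. \<phi> i y powr (1 - real m) * \<Phi> y) = \<psi> i" for i
    by (simp add: fun_eq_iff \<Phi>_def \<psi>_def)
  have \<sigma>i_eq: "\<sigma>i = (\<lambda>j x. fsmult (\<psi> j x) (wedge (dx (2*j - 1)) (dx (2*j))))"
    by (simp add: fun_eq_iff \<sigma>i_def \<Phi>_def \<psi>_def)
  have \<sigma>_eq: "\<sigma> = (\<lambda>x. block_form m (\<lambda>i. \<psi> i x))"
    unfolding \<sigma>_def \<sigma>i_eq sum_wedge_dx_eq_block_form ..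
  have \<zeta>_eq: "\<zeta> = (\<lambda>x. cofactor_form m (\<lambda>i. \<psi> i x))"
    unfolding \<zeta>_def \<sigma>i_eq sum_wedges_eq_cofactor_form ..
  have \<psi>_nonzero: "\<And>i x. i \<in> {1..m} \<Longrightarrow> x \<in> U \<Longrightarrow> \<psi> i x \<noteq> 0"
    using \<psi>_pos by force
  show ?thesis
    unfolding \<sigma>_eq \<zeta>_eq \<psi>_eq
    using alg_constant_cofactor_form[where c = \<psi>, OF \<psi>_nonzero]
      indivisible_cofactor_form[where c = \<psi>, OF \<psi>_nonzero]
      dual_fields_block_form_cofactor_form[where c = \<psi>, OF \<psi>_nonzero] closed_on_cofactor_\<psi>_iff
      closed_on_block_form_iff[of m U \<psi>, unfolded coord_pair_def]
      pderiv_\<psi>_eq_0_iff_locally_factorizable[unfolded coord_pair_def]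
    by blast
qed

end
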